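(* For $d\ge1$ and $k\in\{-1,1\}$ let $\overline B(d,k;\lambda,z)=\prod_{m=1}^dB((-1)^{m+1}k;\lambda,z)$ (matrix product, factors ordered from $m=1$ on the left). Then for all $1\le i,j\le N$, $\lambda\in[0,1]$, $z\in(0,1]$, $$[\overline B(d,k;\lambda,z)]_{i,j}=\sum_{w\in\mathbb F_{i,j}^{(k)}(d)}z^{|w|_{\mathcal K}}\,\mathcal R(e_i,w;\lambda).$$
   Context: Fix an integer $N\ge 3$. Let $\mathcal G_N$ be the groupoid with object set $\{1,\dots,N\}$ generated by arrows $A_{i,j}^{(k)}$, $i\neq j\in\{1,\dots,N\}$, $k\in\{-1,1\}$, with source $i$ and target $j$, subject to the relations $A_{i,j}^{(k)}A_{j,\ell}^{(k)}=A_{i,\ell}^{(k)}$ for all $i,j,\ell$, $k$, with the convention $A_{i,i}^{(k)}:=e_i$ (unit at object $i$). Let $\mathcal A$ be its arrow set and $\mathcal A_i$ the arrows with source $i$. Every arrow has a unique reduced representation: either empty or $A_{i_1,i_2}^{(k)}A_{i_2,i_3}^{(-k)}\cdots A_{i_d,i_{d+1}}^{((-1)^{d+1}k)}$ with $d\ge1$, $i_\ell\ne i_{\ell+1}$; $|w|$ denotes its number $d$ of generators. A metric $|\cdot|_{\mathcal K}$ is given by values $|A_{i,j}^{(k)}|_{\mathcal K}\ge0$ on generators, $|e_i|_{\mathcal K}=0$, and $|w|_{\mathcal K}$ the sum of the values of the generators in the reduced representation of $w$. Let $\mathbb F_{i,j}^{(k)}(d)$ be the set of $w\in\mathcal A_i$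 with $|w|=d$, target $j$, and whose reduced representation has first generator with upper index $k$. Let $\{W_n\}_{n\ge0}$ be the Markov chain on $\mathcal A$ with $P(W_{n+1}=y\mid W_n=x)=p_{i,j}^{(k)}$ if $x^{-1}y=A_{i,j}^{(k)}$ with $i\ne j$ and $0$ otherwise, where $p_{i,j}^{(k)}\in(0,1)$ and $\sum_{j\ne i}\sum_{k=\pm1}p_{i,j}^{(k)}=1$ for each $i$; $P_x,E_x$ denote law and expectation with $W_0=x$. Let $\mathcal R(e_i,w;\lambda)=\sum_{n\ge0}P_{e_i}(\inf\{m\ge0:W_m=w\}=n)\lambda^n$. For $x\in\mathcal A$ let $T(0,x)=\inf\{n\ge0:W_n=W_0x\}$ and $R_{i,j}^{(k)}(\lambda)=E_{e_i}[\lambda^{T(0,A_{i,j}^{(k)})}]$. Let $B(k;\lambda,z)$ be the $N\times N$ matrix with $[B(k;\lambda,z)]_{i,j}=(1-\delta_{i,j})z^{|A_{i,j}^{(k)}|_{\mathcal K}}R_{i,j}^{(k)}(\lambda)$. *)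

theory Defs
  imports Complex_Main
begin

text \<open>Arrows of the groupoid G_N, in reduced representation:
  (i, [(i2,k1), (i3,k2), ..., (i_{d+1},k_d)]) stands for the arrow with source i
  given by A_{i,i2}^{(k1)} A_{i2,i3}^{(k2)} ... ; the empty list is the unit e_i.\<close>
type_synonym arrow = "nat \<times> (nat \<times> int) list"

fun alt_ok :: "nat \<Rightarrow> nat \<Rightarrow> (nat \<times> int) list \<Rightarrow> bool" where
  "alt_ok N prev [] = True"
| "alt_ok N prev [(t,s)] = (t \<in> {1..N} \<and> t \<noteq> prev \<and> s \<in> {-1,1})"
| "alt_ok N prev ((t,s) # (t',s') # ws) =
     (t \<in> {1..N} \<and> t \<noteq> prev \<and> s \<in> {-1,1} \<and> s' = - s \<and> alt_ok N t ((t',s') # ws))"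

definition valid_arrow :: "nat \<Rightarrow> arrow \<Rightarrow> bool" where
  "valid_arrow N w = (fst w \<in> {1..N} \<and> alt_ok N (fst w) (snd w))"

definition unit_arrow :: "nat \<Rightarrow> arrow" where
  "unit_arrow i = (i, [])"

definition gen_arrow :: "nat \<Rightarrow> nat \<Rightarrow> int \<Rightarrow> arrow" where
  "gen_arrow i j k = (i, [(j,k)])"

definition src :: "arrow \<Rightarrow> nat" where
  "src w = fst w"

definition tgt :: "arrow \<Rightarrow> nat" where
  "tgt w = (if snd w = [] then fst w else fst (last (snd w)))"

definition glen :: "arrow \<Rightarrow> nat" where
  "glen w = length (snd w)"

text \<open>Right multiplication x A_{tgt x, j}^{(k)} (for j \<noteq> tgt x), reduced using
  A_{a,t}^{(k)} A_{t,j}^{(k)} = A_{a,j}^{(k)} and A_{a,a}^{(k)} = e_a.\<close>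
definition mul_gen :: "arrow \<Rightarrow> nat \<Rightarrow> int \<Rightarrow> arrow" where
  "mul_gen x j k =
     (if snd x = [] then (fst x, [(j,k)])
      else if snd (last (snd x)) = k then
        (if tgt (fst x, butlast (snd x)) = j then (fst x, butlast (snd x))
         else (fst x, butlast (snd x) @ [(j,k)]))
      else (fst x, snd x @ [(j,k)]))"

text \<open>First-passage probabilities of the Markov chain W_n:
  fpass N p n x w = P_x(inf{m \<ge> 0. W_m = w} = n), defined via the transition kernel
  P(W_{n+1} = x A_{tgt x,j}^{(k)} | W_n = x) = p (tgt x) j k.\<close>
fun fpass :: "nat \<Rightarrow> (nat \<Rightarrow> nat \<Rightarrow> int \<Rightarrow> real) \<Rightarrow> nat \<Rightarrow> arrow \<Rightarrow> arrow \<Rightarrow> real" where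
  "fpass N p 0 x w = (if x = w then 1 else 0)"
| "fpass N p (Suc n) x w =
     (if x = w then 0
      else (\<Sum>j\<in>{1..N} - {tgt x}. \<Sum>k\<in>{-1,1::int}. p (tgt x) j k * fpass N p n (mul_gen x j k) w))"

definition hitR :: "nat \<Rightarrow> (nat \<Rightarrow> nat \<Rightarrow> int \<Rightarrow> real) \<Rightarrow> arrow \<Rightarrow> arrow \<Rightarrow> real \<Rightarrow> real" where
  "hitR N p x w lam = (\<Sum>n. fpass N p n x w * lam ^ n)"

text \<open>R_{i,j}^{(k)}(\<lambda>) = E_{e_i}[\<lambda>^{T(0, A_{i,j}^{(k)})}], where T(0,x) is the first n with
  W_n = W_0 x; with W_0 = e_i, W_0 x = x (and \<lambda>^\<infinity> = 0).\<close>
definition Rgen :: "nat \<Rightarrow> (nat \<Rightarrow> nat \<Rightarrow> int \<Rightarrow> real) \<Rightarrow> nat \<Rightarrow> nat \<Rightarrow> int \<Rightarrow> real \<Rightarrow> real" where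
  "Rgen N p i j k lam = (\<Sum>n. fpass N p n (unit_arrow i) (gen_arrow i j k) * lam ^ n)"

text \<open>The metric |w|_K: sum of generator weights Kw i j k = |A_{i,j}^{(k)}|_K along the
  reduced representation.\<close>
fun klen_aux :: "(nat \<Rightarrow> nat \<Rightarrow> int \<Rightarrow> real) \<Rightarrow> nat \<Rightarrow> (nat \<times> int) list \<Rightarrow> real" where
  "klen_aux Kw prev [] = 0"
| "klen_aux Kw prev ((t,s) # ws) = Kw prev t s + klen_aux Kw t ws"

definition klen :: "(nat \<Rightarrow> nat \<Rightarrow> int \<Rightarrow> real) \<Rightarrow> arrow \<Rightarrow> real" where
  "klen Kw w = klen_aux Kw (fst w) (snd w)"

definition Fset :: "nat \<Rightarrow> nat \<Rightarrow> nat \<Rightarrow> int \<Rightarrow> nat \<Rightarrow> arrow set" where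
  "Fset N i j k d = {w. valid_arrow N w \<and> src w = i \<and> glen w = d \<and> tgt w = j
                        \<and> snd w \<noteq> [] \<and> snd (hd (snd w)) = k}"

text \<open>N \<times> N matrices indexed by {1..N}, represented as functions.\<close>
definition matmul :: "nat \<Rightarrow> (nat \<Rightarrow> nat \<Rightarrow> real) \<Rightarrow> (nat \<Rightarrow> nat \<Rightarrow> real) \<Rightarrow> nat \<Rightarrow> nat \<Rightarrow> real" where
  "matmul N A B i j = (\<Sum>l\<in>{1..N}. A i l * B l j)"

definition matid :: "nat \<Rightarrow> nat \<Rightarrow> real" where
  "matid i j = (if i = j then 1 else 0)"

definition Bmat :: "nat \<Rightarrow> (nat \<Rightarrow> nat \<Rightarrow> int \<Rightarrow> real) \<Rightarrow> (nat \<Rightarrow> nat \<Rightarrow> int \<Rightarrow> real)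
                    \<Rightarrow> int \<Rightarrow> real \<Rightarrow> real \<Rightarrow> nat \<Rightarrow> nat \<Rightarrow> real" where
  "Bmat N Kw p k lam z i j = (if i = j then 0 else z powr (Kw i j k) * Rgen N p i j k lam)"

fun Bbar :: "nat \<Rightarrow> (nat \<Rightarrow> nat \<Rightarrow> int \<Rightarrow> real) \<Rightarrow> (nat \<Rightarrow> nat \<Rightarrow> int \<Rightarrow> real)
              \<Rightarrow> nat \<Rightarrow> int \<Rightarrow> real \<Rightarrow> real \<Rightarrow> nat \<Rightarrow> nat \<Rightarrow> real" where
  "Bbar N Kw p 0 k lam z = matid"
| "Bbar N Kw p (Suc d) k lam z = matmul N (Bmat N Kw p k lam z) (Bbar N Kw p d (- k) lam z)"

end

theory Submission
  imports Defs
begin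

(* Expanding the matrix product, [Bbar(d,k)]_{ij} is a sum over alternating-sign paths
   i = i_1, ..., i_{d+1} = j of products of the entries z^{|A|_K} R_{i_m,i_{m+1}}, and these paths
   are exactly the reduced words in F_{ij}^{(k)}(d).  It therefore suffices to show
   R(e_i, A w; lam) = R_{i,l}^{(k)}(lam) R(e_l, w; lam) for A = A_{i,l}^{(k)} and w a reduced word
   from l whose first generator has sign -k.
   The arrows whose reduced word extends that of A by a suffix of first sign -k form a cone, and
   the walk, which only changes the last letter of its position, can enter this cone only through
   A.  So the first passage to A w splits at the first visit to A into a convolution of
   first-passage probabilities, whose generating function is the product of the two generating
   functions.  Finally the walk is invariant under left translation in the groupoid, so the
   passage from A to A w has the law of the passage from e_l to w. *)

section \<open>Reduced words\<close>

definition word_tgt :: "nat \<Rightarrow> (nat \<times> int) list \<Rightarrow> nat" where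
  "word_tgt i xs = (if xs = [] then i else fst (last xs))"

lemma tgt_eq_word_tgt: "tgt x = word_tgt (fst x) (snd x)"
  by (simp add: tgt_def word_tgt_def)

lemma word_tgt_Nil [simp]: "word_tgt i [] = i"
  by (simp add: word_tgt_def)

lemma word_tgt_snoc [simp]: "word_tgt i (xs @ [c]) = fst c"
  by (simp add: word_tgt_def)

lemma alt_ok_Cons:
  "alt_ok N prev ((t,s) # ws) =
     (t \<in> {1..N} \<and> t \<noteq> prev \<and> s \<in> {-1,1} \<and> (ws \<noteq> [] \<longrightarrow> snd (hd ws) = - s)
      \<and> alt_ok N t ws)"
  by (cases ws) auto

lemma alt_ok_snoc:
  "alt_ok N prev (xs @ [(t,s)]) =
     (alt_ok N prev xs \<and> t \<in> {1..N} \<and> t \<noteq> word_tgt prev xs \<and> s \<in> {-1,1}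
      \<and> (xs \<noteq> [] \<longrightarrow> s = - snd (last xs)))"
proof (induction xs arbitrary: prev)
  case (Cons a xs)
  then show ?case
    by (cases a; cases xs) (auto simp: alt_ok_Cons word_tgt_def)
qed simp

lemma alt_ok_subset: "alt_ok N prev xs \<Longrightarrow> set xs \<subseteq> {1..N} \<times> {-1,1}"
  by (induction N prev xs rule: alt_ok.induct) auto

lemma tgt_valid_arrow:
  assumes "valid_arrow N y"
  shows "tgt y \<in> {1..N}"
proof (cases "snd y" rule: rev_cases)
  case (snoc xs c)
  then show ?thesis using assms by (cases c) (auto simp: valid_arrow_def tgt_def alt_ok_snoc)
qed (use assms in \<open>simp add: valid_arrow_def tgt_def\<close>)

lemma valid_mul_gen:
  assumes y: "valid_arrow N y" and j: "j \<in> {1..N}" "j \<noteq> tgt y" and k: "k \<in> {-1,1}"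
  shows "valid_arrow N (mul_gen y j k)"
proof (cases "snd y" rule: rev_cases)
  case Nil
  then show ?thesis using assms by (auto simp: valid_arrow_def mul_gen_def tgt_def)
next
  case (snoc xs c)
  obtain t s where c: "c = (t,s)" by force
  have last: "alt_ok N (fst y) xs" "t \<in> {1..N}" "t \<noteq> word_tgt (fst y) xs" "s \<in> {-1,1}"
    "xs \<noteq> [] \<longrightarrow> s = - snd (last xs)" "fst y \<in> {1..N}"
    using y snoc c by (auto simp: valid_arrow_def alt_ok_snoc)
  have "j \<noteq> t" using j snoc c by (simp add: tgt_def)
  show ?thesis
  proof (cases "s = k")
    case True
    then show ?thesis
      using snoc c last j k by (simp add: mul_gen_def valid_arrow_def tgt_eq_word_tgt alt_ok_snoc)
  next
    case False
    have "alt_ok N (fst y) ((xs @ [(t,s)]) @ [(j,k)])"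
      by (subst alt_ok_snoc) (use last j k False \<open>j \<noteq> t\<close> in \<open>auto simp: alt_ok_snoc\<close>)
    then show ?thesis using snoc c last False by (simp add: mul_gen_def valid_arrow_def)
  qed
qed

lemma fst_mul_gen [simp]: "fst (mul_gen x j k) = fst x"
  by (simp add: mul_gen_def)

lemma tgt_mul_gen [simp]: "tgt (mul_gen x j k) = j"
  by (auto simp: mul_gen_def tgt_def)

lemma butlast_append_two [simp]: "butlast (xs @ [a, b]) = xs @ [a]"
  using butlast_snoc[of "xs @ [a]" b] by simp

lemma mul_gen_mul_gen_same_sign:
  assumes y: "valid_arrow N y" and "a \<noteq> tgt y" "b \<noteq> a" and k: "k \<in> {-1,1}"
  shows "mul_gen (mul_gen y a k) b k = (if b = tgt y then y else mul_gen y b k)"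
proof -
  obtain i ys where y_eq: "y = (i, ys)" by force
  show ?thesis
  proof (cases ys rule: rev_cases)
    case Nil
    then show ?thesis using assms y_eq by (auto simp: mul_gen_def tgt_def)
  next
    case (snoc xs c)
    obtain t s where c: "c = (t,s)" by force
    have "t \<noteq> word_tgt i xs" "xs \<noteq> [] \<Longrightarrow> s = - snd (last xs)" "k \<noteq> - k"
      using y y_eq snoc c k by (auto simp: valid_arrow_def alt_ok_snoc)
    then show ?thesis using y_eq snoc c assms
      by (cases "xs = []") (auto simp: mul_gen_def tgt_eq_word_tgt word_tgt_def)
  qed
qed

section \<open>Multiplication by a word\<close>

definition mul_word :: "arrow \<Rightarrow> (nat \<times> int) list \<Rightarrow> arrow" where
  "mul_word y xs = foldl (\<lambda>x c. mul_gen x (fst c) (snd c)) y xs"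

lemma mul_word_Nil [simp]: "mul_word y [] = y"
  by (simp add: mul_word_def)

lemma mul_word_snoc [simp]: "mul_word y (xs @ [c]) = mul_gen (mul_word y xs) (fst c) (snd c)"
  by (simp add: mul_word_def)

lemma mul_word_single [simp]: "mul_word y [c] = mul_gen y (fst c) (snd c)"
  by (simp add: mul_word_def)

lemma fst_mul_word [simp]: "fst (mul_word y xs) = fst y"
  by (induction xs rule: rev_induct) auto

lemma valid_mul_word:
  assumes "valid_arrow N y" "alt_ok N (tgt y) xs"
  shows "valid_arrow N (mul_word y xs) \<and> tgt (mul_word y xs) = word_tgt (tgt y) xs"
  using assms(2)
proof (induction xs rule: rev_induct)
  case (snoc c xs)
  then show ?case by (cases c) (auto simp: alt_ok_snoc intro!: valid_mul_gen)
qed (use assms in simp)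

lemma mul_word_eq_append:
  assumes "alt_ok N (tgt y) xs"
    and "snd y = [] \<or> xs = [] \<or> snd (last (snd y)) \<noteq> snd (hd xs)"
  shows "mul_word y xs = (fst y, snd y @ xs)"
  using assms
proof (induction xs rule: rev_induct)
  case (snoc c xs)
  obtain t s where c: "c = (t,s)" by force
  have xs: "alt_ok N (tgt y) xs" "xs \<noteq> [] \<longrightarrow> s = - snd (last xs)" "s \<in> {-1,1}"
    using snoc.prems c by (auto simp: alt_ok_snoc)
  then have "mul_word y xs = (fst y, snd y @ xs)"
    using snoc by (cases xs) auto
  moreover have "snd y @ xs = [] \<or> snd (last (snd y @ xs)) \<noteq> s"
    using snoc.prems c xs by (cases "xs = []") auto
  ultimately show ?case using c by (auto simp: mul_gen_def)
qed simp

lemma mul_word_unit: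
  assumes "alt_ok N t xs"
  shows "mul_word (t, []) xs = (t, xs)"
  using mul_word_eq_append[of N "(t, [])" xs] assms by (simp add: tgt_def)

lemma mul_word_mul_gen:
  assumes y: "valid_arrow N y" and xs: "alt_ok N (tgt y) xs"
    and j: "j \<in> {1..N}" "j \<noteq> word_tgt (tgt y) xs" and k: "k \<in> {-1,1}"
  shows "mul_word y (snd (mul_gen (tgt y, xs) j k)) = mul_gen (mul_word y xs) j k"
proof (cases xs rule: rev_cases)
  case (snoc xs' c)
  obtain t s where c: "c = (t,s)" by force
  have xs': "alt_ok N (tgt y) xs'" "t \<in> {1..N}" "t \<noteq> word_tgt (tgt y) xs'"
    using xs snoc c by (auto simp: alt_ok_snoc)
  have y': "valid_arrow N (mul_word y xs')" "tgt (mul_word y xs') = word_tgt (tgt y) xs'"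
    using valid_mul_word[OF y xs'(1)] by auto
  show ?thesis
  proof (cases "s = k")
    case True
    have "mul_gen (mul_gen (mul_word y xs') t k) j k =
        (if j = word_tgt (tgt y) xs' then mul_word y xs' else mul_gen (mul_word y xs') j k)"
      using mul_gen_mul_gen_same_sign[OF y'(1) _ _ k] xs' y' j snoc c by simp
    then show ?thesis using snoc c True by (simp add: mul_gen_def tgt_eq_word_tgt)
  next
    case False
    then have "snd (mul_gen (tgt y, xs) j k) = xs @ [(j,k)]"
      using snoc c by (simp add: mul_gen_def)
    then show ?thesis by (simp only: mul_word_snoc) simp
  qed
qed (simp add: mul_gen_def)

lemma mul_word_assoc:
  assumes y: "valid_arrow N y" and a: "valid_arrow N a" "fst a = tgt y"
    and xs: "alt_ok N (tgt a) xs"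
  shows "mul_word (mul_word y (snd a)) xs = mul_word y (snd (mul_word a xs))"
  using xs
proof (induction xs rule: rev_induct)
  case (snoc c xs)
  obtain j k where c: "c = (j,k)" by force
  have xs: "alt_ok N (tgt a) xs" "j \<in> {1..N}" "j \<noteq> word_tgt (tgt a) xs" "k \<in> {-1,1}"
    using snoc.prems c by (auto simp: alt_ok_snoc)
  have ax: "valid_arrow N (mul_word a xs)" "tgt (mul_word a xs) = word_tgt (tgt a) xs"
    using valid_mul_word[OF a(1) xs(1)] by auto
  have ax_eq: "(tgt y, snd (mul_word a xs)) = mul_word a xs"
    using a(2) by (metis fst_mul_word prod.collapse)
  have ok: "alt_ok N (tgt y) (snd (mul_word a xs))"
    using ax(1) a(2) by (simp add: valid_arrow_def)
  have "j \<noteq> word_tgt (tgt y) (snd (mul_word a xs))"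
    using ax(2) ax_eq xs(3) by (metis fst_conv snd_conv tgt_eq_word_tgt)
  from mul_word_mul_gen[OF y ok xs(2) this xs(4)]
  have "mul_word y (snd (mul_gen (mul_word a xs) j k)) =
      mul_gen (mul_word y (snd (mul_word a xs))) j k"
    by (simp only: ax_eq)
  then show ?case using snoc.IH[OF xs(1)] c by simp
qed simp

(* A_{t,t0}^{(k)} is the inverse of A_{t0,t}^{(k)}, so left translation by it undoes the one
   by A_{t0,t}^{(k)}. *)
lemma mul_word_gen_inj:
  assumes t: "t0 \<in> {1..N}" "t \<in> {1..N}" "t \<noteq> t0" and k: "k \<in> {-1,1}"
    and xs: "alt_ok N t xs" "alt_ok N t xs'"
    and eq: "mul_word (t0, [(t,k)]) xs = mul_word (t0, [(t,k)]) xs'"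
  shows "xs = xs'"
proof -
  have a: "valid_arrow N (t0, [(t,k)])" and a': "valid_arrow N (t, [(t0,k)])"
    using t k by (auto simp: valid_arrow_def)
  have cancel: "mul_word (t, [(t0,k)]) [(t,k)] = (t, [])"
    by (simp add: mul_gen_def tgt_def)
  have "(t, ys) = mul_word (t, [(t0,k)]) (snd (mul_word (t0, [(t,k)]) ys))" if "alt_ok N t ys" for ys
    using mul_word_assoc[OF a' a _ , of ys] cancel mul_word_unit[OF that] that
    by (simp add: tgt_def)
  then show ?thesis using xs eq by (metis prod.inject)
qed

lemma mul_word_inj:
  assumes y: "valid_arrow N y" and xs: "alt_ok N (tgt y) xs" "alt_ok N (tgt y) xs'"
    and eq: "mul_word y xs = mul_word y xs'"
  shows "xs = xs'"
proof -
  have "xs = xs'"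
    if "i \<in> {1..N}" "alt_ok N i ys" "alt_ok N (word_tgt i ys) xs" "alt_ok N (word_tgt i ys) xs'"
      "mul_word (i, ys) xs = mul_word (i, ys) xs'" for i ys xs xs'
    using that
  proof (induction ys arbitrary: xs xs' rule: rev_induct)
    case Nil
    then show ?case by (simp add: mul_word_unit)
  next
    case (snoc c ys)
    obtain t k where c: "c = (t,k)" by force
    define t0 where "t0 = word_tgt i ys"
    have ys: "alt_ok N i ys" "t \<in> {1..N}" "t \<noteq> t0" "k \<in> {-1,1}"
      "ys \<noteq> [] \<longrightarrow> k = - snd (last ys)"
      using snoc.prems(2) c by (auto simp: alt_ok_snoc t0_def)
    have iys: "valid_arrow N (i, ys)" "tgt (i, ys) = t0"
      using snoc.prems(1) ys(1) by (auto simp: valid_arrow_def t0_def tgt_eq_word_tgt)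
    then have t0: "t0 \<in> {1..N}" using tgt_valid_arrow by metis
    have a: "valid_arrow N (t0, [(t,k)])" "tgt (t0, [(t,k)]) = t"
      using t0 ys by (auto simp: valid_arrow_def tgt_def)
    have "(i, ys @ [c]) = mul_word (i, ys) [(t,k)]"
      using mul_word_eq_append[of N "(i, ys)" "[(t,k)]"] ys iys c by auto
    then have split: "mul_word (i, ys @ [c]) zs = mul_word (i, ys) (snd (mul_word (t0, [(t,k)]) zs))"
      if "alt_ok N t zs" for zs
      using mul_word_assoc[OF iys(1) a(1) _ , of zs] iys a that by simp
    have zs: "alt_ok N t xs" "alt_ok N t xs'" using snoc.prems(3,4) c by auto
    have "alt_ok N t0 (snd (mul_word (t0, [(t,k)]) zs))" if "alt_ok N t zs" for zs
      using valid_mul_word[OF a(1), of zs] a that by (simp add: valid_arrow_def)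
    then have "snd (mul_word (t0, [(t,k)]) xs) = snd (mul_word (t0, [(t,k)]) xs')"
      using snoc.IH[OF snoc.prems(1) ys(1)] snoc.prems(5) split zs by (simp add: t0_def)
    then have "mul_word (t0, [(t,k)]) xs = mul_word (t0, [(t,k)]) xs'"
      by (simp add: prod_eq_iff)
    then show ?case using mul_word_gen_inj[OF t0 ys(2,3,4) zs] by simp
  qed
  then show ?thesis
    using assms by (cases y) (auto simp: valid_arrow_def tgt_eq_word_tgt)
qed

lemma fpass_mul_word:
  assumes y: "valid_arrow N y"
  shows "alt_ok N (tgt y) xs \<Longrightarrow> alt_ok N (tgt y) ws \<Longrightarrow>
    fpass N p n (mul_word y xs) (mul_word y ws) = fpass N p n (tgt y, xs) (tgt y, ws)"
proof (induction n arbitrary: xs)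
  case 0
  then show ?case using mul_word_inj[OF y] by auto
next
  case (Suc n)
  have x: "valid_arrow N (tgt y, xs)" "tgt (mul_word y xs) = tgt (tgt y, xs)"
    using tgt_valid_arrow[OF y] valid_mul_word[OF y Suc.prems(1)] Suc.prems(1)
    by (auto simp: valid_arrow_def tgt_eq_word_tgt)
  have step: "fpass N p n (mul_gen (mul_word y xs) j k) (mul_word y ws)
      = fpass N p n (mul_gen (tgt y, xs) j k) (tgt y, ws)"
    if "j \<in> {1..N} - {tgt (tgt y, xs)}" "k \<in> {-1,1}" for j k
  proof -
    have "alt_ok N (tgt y) (snd (mul_gen (tgt y, xs) j k))"
      using valid_mul_gen[OF x(1), of j k] that by (simp add: valid_arrow_def)
    moreover have "mul_gen (mul_word y xs) j k = mul_word y (snd (mul_gen (tgt y, xs) j k))"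
      using mul_word_mul_gen[OF y Suc.prems(1), of j k] that by (simp add: tgt_eq_word_tgt)
    moreover have "(tgt y, snd (mul_gen (tgt y, xs) j k)) = mul_gen (tgt y, xs) j k"
      by (simp add: prod_eq_iff)
    ultimately show ?thesis
      using Suc.IH Suc.prems(2) by metis
  qed
  have "mul_word y xs = mul_word y ws \<longleftrightarrow> (tgt y, xs) = (tgt y, ws)"
    using mul_word_inj[OF y Suc.prems] by auto
  then show ?case
    unfolding fpass.simps x(2) using step by (auto intro!: sum.cong)
qed

section \<open>First passage into a cone\<close>

definition cone :: "arrow \<Rightarrow> int \<Rightarrow> arrow set" where
  "cone u s = {x. fst x = fst u \<and> (\<exists>c rest. snd x = snd u @ c # rest \<and> snd c = s)}"

lemma self_notin_cone: "u \<notin> cone u s"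
  by (auto simp: cone_def)

lemma append_Cons_eq_snoc:
  assumes "us @ c # rest = zs @ [e]"
  shows "(rest = [] \<and> zs = us \<and> c = e) \<or> (\<exists>rest'. zs = us @ c # rest')"
  using assms by (cases rest rule: rev_cases) auto

lemma mul_gen_notin_cone:
  assumes x: "x \<notin> cone u s" "x \<noteq> u"
  shows "mul_gen x j k \<notin> cone u s"
proof
  assume "mul_gen x j k \<in> cone u s"
  then obtain c rest where fst_x: "fst x = fst u" and c: "snd c = s"
    and split: "snd (mul_gen x j k) = snd u @ c # rest"
    by (auto simp: cone_def)
  have x_cone: "\<And>c' rest'. snd x = snd u @ c' # rest' \<Longrightarrow> snd c' \<noteq> s"
    using x(1) fst_x by (auto simp: cone_def)
  have x_u: "snd x \<noteq> snd u" using x(2) fst_x by (metis prod.collapse)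
  consider (unit) "snd x = []" | (cancel) "snd x \<noteq> []" "snd (last (snd x)) = k"
      "snd (mul_gen x j k) = butlast (snd x)"
    | (merge) "snd x \<noteq> []" "snd (last (snd x)) = k"
      "snd (mul_gen x j k) = butlast (snd x) @ [(j,k)]"
    | (extend) "snd x \<noteq> []" "snd (mul_gen x j k) = snd x @ [(j,k)]"
    by (cases "snd x = []"; cases "snd (last (snd x)) = k";
        cases "tgt (fst x, butlast (snd x)) = j") (auto simp: mul_gen_def)
  then show False
  proof cases
    case unit
    then show False using split x_u by (cases "snd u") (auto simp: mul_gen_def)
  next
    case cancel
    then have "snd x = snd u @ c # (rest @ [last (snd x)])"
      using split by (metis append_butlast_last_id append_eq_appendI append_Cons)
    then show False using x_cone c by blast
  next
    case merge
    have "snd x = butlast (snd x) @ [last (snd x)]" using merge by simp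
    then show False
      using append_Cons_eq_snoc[of "snd u" c rest "butlast (snd x)" "(j,k)"] merge split x_cone c
      by (metis append_Cons append_assoc snd_conv)
  next
    case extend
    then show False
      using append_Cons_eq_snoc[of "snd u" c rest "snd x" "(j,k)"] split x_cone c x_u by metis
  qed
qed

lemma fpass_self: "fpass N p m u u = (if m = 0 then 1 else 0)"
  by (cases m) auto

lemma fpass_cone_convolution:
  assumes w: "w \<in> cone u s"
  shows "x \<notin> cone u s \<Longrightarrow> fpass N p n x w = (\<Sum>m\<le>n. fpass N p m x u * fpass N p (n - m) u w)"
proof (induction n arbitrary: x)
  case 0
  then show ?case using w self_notin_cone[of u s] by auto
next
  case (Suc n)
  show ?case
  proof (cases "x = u")
    case True
    then show ?thesis by (simp add: fpass_self if_distrib[of "\<lambda>a. a * _"] sum.delta cong: if_cong)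
  next
    case False
    let ?step = "\<lambda>m. \<Sum>j\<in>{1..N} - {tgt x}. \<Sum>k\<in>{-1,1::int}.
      p (tgt x) j k * fpass N p m (mul_gen x j k) u"
    have "x \<noteq> w" using Suc.prems w by auto
    then have "fpass N p (Suc n) x w = (\<Sum>j\<in>{1..N} - {tgt x}. \<Sum>k\<in>{-1,1::int}. p (tgt x) j k *
            (\<Sum>m\<le>n. fpass N p m (mul_gen x j k) u * fpass N p (n - m) u w))"
      using Suc.IH[OF mul_gen_notin_cone[OF Suc.prems False]] by simp
    also have "\<dots> = (\<Sum>m\<le>n. ?step m * fpass N p (n - m) u w)"
      by (simp add: sum_distrib_left sum_distrib_right sum.swap[of _ "{..n}"] mult.assoc distrib_right)
    also have "\<dots> = (\<Sum>m\<le>n. fpass N p (Suc m) x u * fpass N p (Suc n - Suc m) u w)"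
      using False by simp
    also have "\<dots> = (\<Sum>m\<le>Suc n. fpass N p m x u * fpass N p (Suc n - m) u w)"
      using False by (simp only: sum.atMost_Suc_shift diff_Suc_Suc) simp
    finally show ?thesis .
  qed
qed

section \<open>Generating functions\<close>

lemma Cauchy_product_power_series:
  fixes a b :: "nat \<Rightarrow> 'a::{real_normed_field,banach}"
  assumes "summable (\<lambda>n. norm (a n * x ^ n))" "summable (\<lambda>n. norm (b n * x ^ n))"
  shows "(\<lambda>n. (\<Sum>m\<le>n. a m * b (n - m)) * x ^ n) sums ((\<Sum>n. a n * x ^ n) * (\<Sum>n. b n * x ^ n))"
proof -
  have "(\<Sum>m\<le>n. a m * x ^ m * (b (n - m) * x ^ (n - m))) = (\<Sum>m\<le>n. a m * b (n - m)) * x ^ n" for n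
    unfolding sum_distrib_right by (intro sum.cong) (auto simp: mult_ac power_add[symmetric])
  then show ?thesis using Cauchy_product_sums[OF assms] by simp
qed

definition stochastic :: "nat \<Rightarrow> (nat \<Rightarrow> nat \<Rightarrow> int \<Rightarrow> real) \<Rightarrow> bool" where
  "stochastic N p \<longleftrightarrow> (\<forall>a\<in>{1..N}. (\<forall>b\<in>{1..N} - {a}. \<forall>s\<in>{-1,1}. 0 \<le> p a b s)
     \<and> (\<Sum>b\<in>{1..N} - {a}. \<Sum>s\<in>{-1,1::int}. p a b s) = 1)"

lemma fpass_nonneg:
  assumes "stochastic N p"
  shows "tgt x \<in> {1..N} \<Longrightarrow> 0 \<le> fpass N p n x w"
proof (induction n arbitrary: x)
  case (Suc n)
  have "0 \<le> (\<Sum>j\<in>{1..N} - {tgt x}. \<Sum>k\<in>{-1,1::int}. p (tgt x) j k * fpass N p n (mul_gen x j k) w)"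
    using Suc assms by (intro sum_nonneg mult_nonneg_nonneg) (auto simp: stochastic_def)
  then show ?case by simp
qed simp

lemma fpass_partial_sum_le_1:
  assumes p: "stochastic N p"
  shows "tgt x \<in> {1..N} \<Longrightarrow> (\<Sum>n<M. fpass N p n x w) \<le> 1"
proof (induction M arbitrary: x)
  case (Suc M)
  show ?case
  proof (cases "x = w")
    case True
    then show ?thesis by (simp add: sum.lessThan_Suc_shift del: sum.lessThan_Suc)
  next
    case False
    have "(\<Sum>n<Suc M. fpass N p n x w) = (\<Sum>n<M. fpass N p (Suc n) x w)"
      using False by (simp add: sum.lessThan_Suc_shift del: sum.lessThan_Suc fpass.simps(2))
    also have "\<dots> = (\<Sum>j\<in>{1..N} - {tgt x}. \<Sum>k\<in>{-1,1::int}.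
        p (tgt x) j k * (\<Sum>n<M. fpass N p n (mul_gen x j k) w))"
      using False by (simp add: sum_distrib_left sum.swap[of _ "{..<M}"] sum.distrib)
    also have "\<dots> \<le> (\<Sum>j\<in>{1..N} - {tgt x}. \<Sum>k\<in>{-1,1::int}. p (tgt x) j k)"
      using p Suc by (intro sum_mono mult_left_le) (auto simp: stochastic_def)
    also have "\<dots> = 1" using p Suc.prems by (simp add: stochastic_def)
    finally show ?thesis .
  qed
qed simp

lemma summable_fpass_power:
  assumes p: "stochastic N p" and x: "tgt x \<in> {1..N}" and lam: "0 \<le> lam" "lam \<le> 1"
  shows "summable (\<lambda>n. norm (fpass N p n x w * lam ^ n))"
proof (rule summable_comparison_test')
  show "summable (\<lambda>n. fpass N p n x w)"
  proof (rule bounded_imp_summable)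
    show "0 \<le> fpass N p n x w" for n using fpass_nonneg[OF p x] .
    show "(\<Sum>m\<le>n. fpass N p m x w) \<le> 1" for n
      using fpass_partial_sum_le_1[OF p x, where M = "Suc n"] by (simp add: lessThan_Suc_atMost)
  qed
  show "norm (norm (fpass N p n x w * lam ^ n)) \<le> fpass N p n x w" for n
    using fpass_nonneg[OF p x] lam by (simp add: abs_mult mult_left_le power_le_one)
qed

lemma hitR_gen_Cons:
  assumes p: "stochastic N p" and i: "i \<in> {1..N}" and l: "l \<in> {1..N}" "l \<noteq> i"
    and k: "k \<in> {-1,1}"
    and v: "valid_arrow N (l, vs)" "vs \<noteq> []" "snd (hd vs) = - k"
    and lam: "0 \<le> lam" "lam \<le> 1"
  shows "hitR N p (unit_arrow i) (i, (l,k) # vs) lam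
    = Rgen N p i l k lam * hitR N p (unit_arrow l) (l, vs) lam"
proof -
  let ?a = "gen_arrow i l k" and ?w = "(i, (l,k) # vs)"
  have a: "valid_arrow N ?a" "tgt ?a = l"
    using i l k by (auto simp: valid_arrow_def gen_arrow_def tgt_def)
  have vs: "alt_ok N (tgt ?a) vs" using v a by (simp add: valid_arrow_def)
  have "?w = mul_word ?a vs"
    using mul_word_eq_append[OF vs] v k by (auto simp: gen_arrow_def)
  then have from_a: "fpass N p m ?a ?w = fpass N p m (unit_arrow l) (l, vs)" for m
    using fpass_mul_word[OF a(1) _ vs, where p = p and n = m and xs = "[]"] a
    by (simp add: unit_arrow_def)
  have "?w \<in> cone ?a (- k)" "unit_arrow i \<notin> cone ?a (- k)"
    using v by (cases vs) (auto simp: cone_def gen_arrow_def unit_arrow_def)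
  from fpass_cone_convolution[OF this] from_a
  have "fpass N p n (unit_arrow i) ?w
      = (\<Sum>m\<le>n. fpass N p m (unit_arrow i) ?a * fpass N p (n - m) (unit_arrow l) (l, vs))" for n
    by simp
  moreover have "tgt (unit_arrow i) \<in> {1..N}" "tgt (unit_arrow l) \<in> {1..N}"
    using i l by (auto simp: unit_arrow_def tgt_def)
  ultimately have "(\<lambda>n. fpass N p n (unit_arrow i) ?w * lam ^ n) sums
      (Rgen N p i l k lam * hitR N p (unit_arrow l) (l, vs) lam)"
    using Cauchy_product_power_series[OF summable_fpass_power[OF p _ lam]
        summable_fpass_power[OF p _ lam]]
    by (simp add: Rgen_def hitR_def)
  then show ?thesis by (simp add: hitR_def sums_iff)
qed

section \<open>Alternating words and the matrix product\<close>

lemma finite_Fset: "finite (Fset N i j k d)"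
proof (rule finite_subset)
  show "Fset N i j k d \<subseteq> {i} \<times> {xs. set xs \<subseteq> {1..N} \<times> {-1,1} \<and> length xs = d}"
    using alt_ok_subset by (fastforce simp: Fset_def valid_arrow_def src_def glen_def)
  show "finite ({i} \<times> {xs. set xs \<subseteq> {1..N} \<times> {-1,1::int} \<and> length xs = d})"
    by (intro finite_cartesian_product finite_lists_length_eq) auto
qed

lemma Fset_one:
  assumes "i \<in> {1..N}" "j \<in> {1..N}" "k \<in> {-1,1}"
  shows "Fset N i j k 1 = (if i = j then {} else {gen_arrow i j k})"
proof -
  have "w \<in> Fset N i j k 1 \<longleftrightarrow> i \<noteq> j \<and> w = gen_arrow i j k" for w
    using assms
    by (cases w; cases "snd w")
       (auto simp: Fset_def glen_def valid_arrow_def src_def tgt_def gen_arrow_def)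
  then show ?thesis by auto
qed

lemma Cons_in_Fset_iff:
  assumes "k \<in> {-1,1}"
  shows "(i, (l,s) # vs) \<in> Fset N i' j k (Suc (Suc d)) \<longleftrightarrow>
    i' = i \<and> i \<in> {1..N} \<and> l \<noteq> i \<and> s = k \<and> (l, vs) \<in> Fset N l j (- k) (Suc d)"
  using assms
  by (cases vs) (auto simp: Fset_def glen_def valid_arrow_def src_def tgt_def alt_ok_Cons)

lemma Fset_Suc_Suc:
  assumes "i \<in> {1..N}" "k \<in> {-1,1}"
  shows "Fset N i j k (Suc (Suc d))
    = (\<lambda>v. (i, (fst v, k) # snd v)) ` (\<Union>l\<in>{1..N} - {i}. Fset N l j (- k) (Suc d))"
proof (intro set_eqI iffI)
  fix w assume w: "w \<in> Fset N i j k (Suc (Suc d))"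
  then obtain l s vs where w_eq: "w = (i, (l,s) # vs)"
    by (cases w; cases "snd w") (auto simp: Fset_def src_def glen_def)
  moreover have "l \<noteq> i" "s = k" and v: "(l, vs) \<in> Fset N l j (- k) (Suc d)"
    using w w_eq Cons_in_Fset_iff[OF assms(2)] by auto
  moreover have "l \<in> {1..N}" using v by (simp add: Fset_def valid_arrow_def)
  ultimately show "w \<in> (\<lambda>v. (i, (fst v, k) # snd v)) ` (\<Union>l\<in>{1..N} - {i}. Fset N l j (- k) (Suc d))"
    by (auto intro!: image_eqI[where x = "(l, vs)"])
next
  fix w assume "w \<in> (\<lambda>v. (i, (fst v, k) # snd v)) ` (\<Union>l\<in>{1..N} - {i}. Fset N l j (- k) (Suc d))"
  then show "w \<in> Fset N i j k (Suc (Suc d))"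
    using assms by (auto simp: Cons_in_Fset_iff) (auto simp: Fset_def src_def)
qed

lemma sum_Fset_Suc_Suc:
  assumes "i \<in> {1..N}" "k \<in> {-1,1}"
  shows "(\<Sum>w\<in>Fset N i j k (Suc (Suc d)). f w)
    = (\<Sum>l\<in>{1..N} - {i}. \<Sum>v\<in>Fset N l j (- k) (Suc d). f (i, (l,k) # snd v))"
proof -
  have "inj (\<lambda>v::arrow. (i, (fst v, k) # snd v))"
    by (auto intro!: injI simp: prod_eq_iff)
  moreover have "Fset N l j (- k) (Suc d) \<inter> Fset N l' j (- k) (Suc d) = {}" if "l \<noteq> l'" for l l'
    using that by (auto simp: Fset_def src_def)
  ultimately have "(\<Sum>w\<in>Fset N i j k (Suc (Suc d)). f w)
      = (\<Sum>l\<in>{1..N} - {i}. \<Sum>v\<in>Fset N l j (- k) (Suc d). f (i, (fst v, k) # snd v))"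
    using Fset_Suc_Suc[OF assms]
    by (simp add: sum.reindex inj_on_subset sum.UNION_disjoint finite_Fset)
  then show ?thesis
    by (auto simp: Fset_def src_def intro!: sum.cong)
qed

lemma Bmat_mul_weighted_hitR:
  assumes p: "stochastic N p" and i: "i \<in> {1..N}" and k: "k \<in> {-1,1}"
    and l: "l \<in> {1..N} - {i}" and v: "v \<in> Fset N l j (- k) d"
    and lam: "0 \<le> lam" "lam \<le> 1"
  shows "Bmat N Kw p k lam z i l * (z powr (klen Kw v) * hitR N p (unit_arrow l) v lam)
    = z powr (klen Kw (i, (l,k) # snd v)) * hitR N p (unit_arrow i) (i, (l,k) # snd v) lam"
proof -
  obtain vs where vs: "v = (l, vs)" "valid_arrow N (l, vs)" "vs \<noteq> []" "snd (hd vs) = - k"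
    using v by (cases v) (auto simp: Fset_def src_def)
  then show ?thesis
    using hitR_gen_Cons[OF p i _ _ k vs(2-4) lam] l
    by (simp add: Bmat_def klen_def powr_add mult_ac)
qed

lemma Bbar_Suc_eq_sum_Fset:
  assumes p: "stochastic N p" and j: "j \<in> {1..N}" and lam: "0 \<le> lam" "lam \<le> 1"
  shows "i \<in> {1..N} \<Longrightarrow> k \<in> {-1,1} \<Longrightarrow> Bbar N Kw p (Suc d) k lam z i j
    = (\<Sum>w\<in>Fset N i j k (Suc d). z powr (klen Kw w) * hitR N p (unit_arrow i) w lam)"
proof (induction d arbitrary: i k)
  case 0
  have "Bbar N Kw p (Suc 0) k lam z i j = Bmat N Kw p k lam z i j"
    using j by (simp add: matmul_def matid_def if_distrib[of "\<lambda>x. _ * x"] sum.delta' cong: if_cong)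
  then show ?case
    using Fset_one[OF 0(1) j 0(2)] by (simp add: Bmat_def klen_def hitR_def Rgen_def gen_arrow_def)
next
  case (Suc d)
  have "Bbar N Kw p (Suc (Suc d)) k lam z i j
      = (\<Sum>l\<in>{1..N} - {i}. Bmat N Kw p k lam z i l * Bbar N Kw p (Suc d) (- k) lam z l j)"
    unfolding Bbar.simps(2)[of N Kw p "Suc d"] matmul_def
    using Suc.prems(1) by (simp add: sum.remove Bmat_def del: Bbar.simps)
  also have "\<dots> = (\<Sum>l\<in>{1..N} - {i}. \<Sum>v\<in>Fset N l j (- k) (Suc d).
      z powr (klen Kw (i, (l,k) # snd v)) * hitR N p (unit_arrow i) (i, (l,k) # snd v) lam)"
  proof (rule sum.cong[OF refl])
    fix l assume l: "l \<in> {1..N} - {i}"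
    have "- k \<in> {-1,1}" using Suc.prems(2) by auto
    with l show "Bmat N Kw p k lam z i l * Bbar N Kw p (Suc d) (- k) lam z l j
        = (\<Sum>v\<in>Fset N l j (- k) (Suc d).
            z powr (klen Kw (i, (l,k) # snd v)) * hitR N p (unit_arrow i) (i, (l,k) # snd v) lam)"
      using Suc.IH[of l "- k"] Bmat_mul_weighted_hitR[OF p Suc.prems l _ lam]
      by (simp add: sum_distrib_left del: Bbar.simps)
  qed
  also have "\<dots> = (\<Sum>w\<in>Fset N i j k (Suc (Suc d)). z powr (klen Kw w) * hitR N p (unit_arrow i) w lam)"
    by (rule sum_Fset_Suc_Suc[OF Suc.prems, symmetric])
  finally show ?case .
qed

theorem lemma6p3:
  fixes N :: nat and p Kw :: "nat \<Rightarrow> nat \<Rightarrow> int \<Rightarrow> real"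
    and d i j :: nat and k :: int and lam z :: real
  assumes N3: "N \<ge> 3"
    and p_pos: "\<And>a b s. a \<in> {1..N} \<Longrightarrow> b \<in> {1..N} \<Longrightarrow> a \<noteq> b \<Longrightarrow> s \<in> {-1,1} \<Longrightarrow>
                   0 < p a b s \<and> p a b s < 1"
    and p_sum: "\<And>a. a \<in> {1..N} \<Longrightarrow> (\<Sum>b\<in>{1..N} - {a}. \<Sum>s\<in>{-1,1::int}. p a b s) = 1"
    and K_nonneg: "\<And>a b s. a \<in> {1..N} \<Longrightarrow> b \<in> {1..N} \<Longrightarrow> a \<noteq> b \<Longrightarrow> s \<in> {-1,1} \<Longrightarrow>
                   0 \<le> Kw a b s"
    and d: "d \<ge> 1" and k: "k \<in> {-1,1}"
    and ij: "i \<in> {1..N}" "j \<in> {1..N}"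
    and lam: "0 \<le> lam" "lam \<le> 1"
    and z: "0 < z" "z \<le> 1"
  shows "Bbar N Kw p d k lam z i j
           = (\<Sum>w\<in>Fset N i j k d. z powr (klen Kw w) * hitR N p (unit_arrow i) w lam)"
proof -
  have "stochastic N p"
    using p_pos p_sum by (auto simp: stochastic_def less_imp_le)
  moreover obtain d' where "d = Suc d'"
    using d by (cases d) auto
  ultimately show ?thesis
    using Bbar_Suc_eq_sum_Fset[OF _ ij(2) lam] ij(1) k by simp
qed

end
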